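(* A regular semigroup is a generalized inverse semigroup if and only if it is isomorphic to a subsemigroup of a $\lambda$-semidirect product $K\rtimes_\lambda T$ of a rectangular band $K$ by an inverse semigroup $T$ (with respect to some action of $T$ on $K$).
   Context: A generalized inverse semigroup is an orthodox semigroup (regular semigroup whose idempotents form a subsemigroup) whose set of idempotents is a normal band ($efge=egfe$ for all idempotents $e,f,g$). A rectangular band is a semigroup satisfying $xx=x$ and $xyz=xz$. Let $K$ be a semigroup and $T$ an inverse semigroup; $T$ acts on $K$ if an antihomomorphism $t\mapsto\varepsilon_t$ from $T$ into the endomorphism monoid of $K$ is given (so $\varepsilon_u\varepsilon_t=\varepsilon_{tu}$); write ${}^t a$ for $a\varepsilon_t$. The $\lambda$-semidirect product $K\rtimes_\lambda T$ is the set $\{(a,t)\in K\times T: {}^{tt^{-1}}a=a\}$ with multiplication $(a,t)(b,u)=({}^{(tu)(tu)^{-1}}a\cdot {}^t b,\ tu)$. *)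

theory Defs
  imports Main
begin

definition sgrp :: "'a set \<Rightarrow> ('a \<Rightarrow> 'a \<Rightarrow> 'a) \<Rightarrow> bool" where
  "sgrp S m \<longleftrightarrow> (\<forall>x\<in>S. \<forall>y\<in>S. m x y \<in> S) \<and>
     (\<forall>x\<in>S. \<forall>y\<in>S. \<forall>z\<in>S. m (m x y) z = m x (m y z))"

definition regular_sgrp :: "'a set \<Rightarrow> ('a \<Rightarrow> 'a \<Rightarrow> 'a) \<Rightarrow> bool" where
  "regular_sgrp S m \<longleftrightarrow> sgrp S m \<and> (\<forall>a\<in>S. \<exists>x\<in>S. m (m a x) a = a)"

definition idems :: "'a set \<Rightarrow> ('a \<Rightarrow> 'a \<Rightarrow> 'a) \<Rightarrow> 'a set" where
  "idems S m = {e\<in>S. m e e = e}"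

definition orthodox :: "'a set \<Rightarrow> ('a \<Rightarrow> 'a \<Rightarrow> 'a) \<Rightarrow> bool" where
  "orthodox S m \<longleftrightarrow> regular_sgrp S m \<and> (\<forall>e\<in>idems S m. \<forall>f\<in>idems S m. m e f \<in> idems S m)"

definition generalized_inverse :: "'a set \<Rightarrow> ('a \<Rightarrow> 'a \<Rightarrow> 'a) \<Rightarrow> bool" where
  "generalized_inverse S m \<longleftrightarrow> orthodox S m \<and>
     (\<forall>e\<in>idems S m. \<forall>f\<in>idems S m. \<forall>g\<in>idems S m.
        m (m (m e f) g) e = m (m (m e g) f) e)"

definition rectangular_band :: "'a set \<Rightarrow> ('a \<Rightarrow> 'a \<Rightarrow> 'a) \<Rightarrow> bool" where
  "rectangular_band K m \<longleftrightarrow> sgrp K m \<and> (\<forall>x\<in>K. m x x = x) \<and>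
     (\<forall>x\<in>K. \<forall>y\<in>K. \<forall>z\<in>K. m (m x y) z = m x z)"

definition inverse_sgrp :: "'a set \<Rightarrow> ('a \<Rightarrow> 'a \<Rightarrow> 'a) \<Rightarrow> bool" where
  "inverse_sgrp T m \<longleftrightarrow> sgrp T m \<and>
     (\<forall>a\<in>T. \<exists>!x. x \<in> T \<and> m (m a x) a = a \<and> m (m x a) x = x)"

definition sinv :: "'a set \<Rightarrow> ('a \<Rightarrow> 'a \<Rightarrow> 'a) \<Rightarrow> 'a \<Rightarrow> 'a" where
  "sinv T m a = (THE x. x \<in> T \<and> m (m a x) a = a \<and> m (m x a) x = x)"

text \<open>An action of T on K: each act t is an endomorphism of K, and t \<mapsto> act t is an
  antihomomorphism into End(K) with right-action composition, i.e.
  \<open>\<epsilon>\<^sub>u\<epsilon>\<^sub>t = \<epsilon>\<^sub>t\<^sub>u\<close>, which in left notation reads act (t u) a = act t (act u a).\<close>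
definition sgrp_action :: "'k set \<Rightarrow> ('k \<Rightarrow> 'k \<Rightarrow> 'k) \<Rightarrow> 't set \<Rightarrow> ('t \<Rightarrow> 't \<Rightarrow> 't)
    \<Rightarrow> ('t \<Rightarrow> 'k \<Rightarrow> 'k) \<Rightarrow> bool" where
  "sgrp_action K km T tm act \<longleftrightarrow>
     (\<forall>t\<in>T. \<forall>a\<in>K. act t a \<in> K) \<and>
     (\<forall>t\<in>T. \<forall>a\<in>K. \<forall>b\<in>K. act t (km a b) = km (act t a) (act t b)) \<and>
     (\<forall>t\<in>T. \<forall>u\<in>T. \<forall>a\<in>K. act (tm t u) a = act t (act u a))"

definition lsd_carrier :: "'k set \<Rightarrow> 't set \<Rightarrow> ('t \<Rightarrow> 't \<Rightarrow> 't) \<Rightarrow> ('t \<Rightarrow> 'k \<Rightarrow> 'k)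
    \<Rightarrow> ('k \<times> 't) set" where
  "lsd_carrier K T tm act = {(a, t). a \<in> K \<and> t \<in> T \<and> act (tm t (sinv T tm t)) a = a}"

definition lsd_mult :: "('k \<Rightarrow> 'k \<Rightarrow> 'k) \<Rightarrow> 't set \<Rightarrow> ('t \<Rightarrow> 't \<Rightarrow> 't) \<Rightarrow> ('t \<Rightarrow> 'k \<Rightarrow> 'k)
    \<Rightarrow> 'k \<times> 't \<Rightarrow> 'k \<times> 't \<Rightarrow> 'k \<times> 't" where
  "lsd_mult km T tm act p q =
     (case p of (a, t) \<Rightarrow> case q of (b, u) \<Rightarrow>
        (km (act (tm (tm t u) (sinv T tm (tm t u))) a) (act t b), tm t u))"

definition embeds_in_lsd :: "'a set \<Rightarrow> ('a \<Rightarrow> 'a \<Rightarrow> 'a) \<Rightarrow> 'k set \<Rightarrow> ('k \<Rightarrow> 'k \<Rightarrow> 'k)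
    \<Rightarrow> 't set \<Rightarrow> ('t \<Rightarrow> 't \<Rightarrow> 't) \<Rightarrow> ('t \<Rightarrow> 'k \<Rightarrow> 'k) \<Rightarrow> bool" where
  "embeds_in_lsd S m K km T tm act \<longleftrightarrow>
     rectangular_band K km \<and> inverse_sgrp T tm \<and> sgrp_action K km T tm act \<and>
     (\<exists>\<phi>. inj_on \<phi> S \<and> \<phi> ` S \<subseteq> lsd_carrier K T tm act \<and>
          (\<forall>x\<in>S. \<forall>y\<in>S. \<phi> (m x y) = lsd_mult km T tm act (\<phi> x) (\<phi> y)))"

end

theory Submission
  imports Defs
begin

(* Write V(x) for the set of inverses of x.  In an orthodox semigroup S, V(x) = V(y) is a
   congruence gamma whose quotient is an inverse semigroup.  If moreover the idempotents form a
   normal band, z s u does not depend on the choice of s within a gamma-class, so S/gamma acts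
   on the rectangular band of pairs ([z], <y>), the classes of the multiplication maps u |-> z u
   and u |-> u y, via V(x) . ([z], <y>) = ([z s], <x y>) for s in V(x).  The map
   x |-> (([x x'], <x>), V(x)) is an injective homomorphism into the lambda-semidirect product,
   as x = x x' x is recovered from [x x'] and <x>.
   Conversely, the idempotents of such a product are pairs (a, t) with t idempotent and
   t . a = a; they are closed under multiplication, and e f g e and e g f e both evaluate to
   (t u w . a, t u w), which is symmetric since idempotents of an inverse semigroup commute.
   An embedding of S reflects these identities, so S is a generalized inverse semigroup. *)

section \<open>Inverses in a semigroup\<close>

locale semigroup_on =
  fixes S :: "'a set" and mult :: "'a \<Rightarrow> 'a \<Rightarrow> 'a" (infixl "\<cdot>" 70)
  assumes sgrp: "sgrp S (\<cdot>)"
begin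

lemma mult_closed [simp]: "x \<in> S \<Longrightarrow> y \<in> S \<Longrightarrow> x \<cdot> y \<in> S"
  using sgrp unfolding sgrp_def by blast

lemma mult_assoc: "x \<in> S \<Longrightarrow> y \<in> S \<Longrightarrow> z \<in> S \<Longrightarrow> x \<cdot> y \<cdot> z = x \<cdot> (y \<cdot> z)"
  using sgrp unfolding sgrp_def by blast

abbreviation E :: "'a set" where
  "E \<equiv> idems S (\<cdot>)"

lemma idemsI: "e \<in> S \<Longrightarrow> e \<cdot> e = e \<Longrightarrow> e \<in> E"
  unfolding idems_def by simp

lemma idems_closed [simp]: "e \<in> E \<Longrightarrow> e \<in> S"
  unfolding idems_def by simp

lemma idem_simps [simp]:
  assumes "e \<in> E"
  shows "e \<cdot> e = e" "z \<in> S \<Longrightarrow> e \<cdot> (e \<cdot> z) = e \<cdot> z"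
  using assms unfolding idems_def by (auto simp: mult_assoc[symmetric])

definition inverses :: "'a \<Rightarrow> 'a set" where
  "inverses x = {y \<in> S. x \<cdot> y \<cdot> x = x \<and> y \<cdot> x \<cdot> y = y}"

lemma inversesI: "y \<in> S \<Longrightarrow> x \<cdot> y \<cdot> x = x \<Longrightarrow> y \<cdot> x \<cdot> y = y \<Longrightarrow> y \<in> inverses x"
  unfolding inverses_def by simp

lemma inverses_closed [simp]: "y \<in> inverses x \<Longrightarrow> y \<in> S"
  unfolding inverses_def by simp

lemma inverse_eqs [simp]:
  assumes "y \<in> inverses x"
  shows "x \<cdot> y \<cdot> x = x" "y \<cdot> x \<cdot> y = y"
  using assms unfolding inverses_def by simp_all

(* Right-associated forms, also with a trailing factor z, since products are normalised
   with mult_assoc. *)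
lemma inverse_simps [simp]:
  assumes "y \<in> inverses x" "x \<in> S"
  shows "x \<cdot> (y \<cdot> x) = x" "y \<cdot> (x \<cdot> y) = y"
    "z \<in> S \<Longrightarrow> x \<cdot> (y \<cdot> (x \<cdot> z)) = x \<cdot> z" "z \<in> S \<Longrightarrow> y \<cdot> (x \<cdot> (y \<cdot> z)) = y \<cdot> z"
  using assms inverse_eqs[OF assms(1)] by (auto simp: mult_assoc[symmetric])

lemma inverses_sym: "x \<in> S \<Longrightarrow> y \<in> inverses x \<Longrightarrow> x \<in> inverses y"
  by (rule inversesI) simp_all

lemma idem_self_inverse: "e \<in> E \<Longrightarrow> e \<in> inverses e"
  by (rule inversesI) simp_all

lemma inverse_mult_idems:
  assumes "x \<in> S" "y \<in> inverses x"
  shows "x \<cdot> y \<in> E" "y \<cdot> x \<in> E"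
  using assms by (auto intro!: idemsI simp: mult_assoc)

lemma inverses_nonempty_if_regular:
  assumes "regular_sgrp S (\<cdot>)" and a: "a \<in> S"
  shows "inverses a \<noteq> {}"
proof -
  obtain x where x: "x \<in> S" and axa: "a \<cdot> x \<cdot> a = a"
    using assms unfolding regular_sgrp_def by blast
  have "a \<cdot> (x \<cdot> a \<cdot> x) \<cdot> a = (a \<cdot> x \<cdot> a) \<cdot> x \<cdot> a"
    using x a by (simp add: mult_assoc)
  then have "a \<cdot> (x \<cdot> a \<cdot> x) \<cdot> a = a"
    using axa by simp
  moreover have "x \<cdot> a \<cdot> x \<cdot> a \<cdot> (x \<cdot> a \<cdot> x) = x \<cdot> a \<cdot> x"
  proof -
    have "x \<cdot> a \<cdot> x \<cdot> a \<cdot> (x \<cdot> a \<cdot> x) = x \<cdot> (a \<cdot> x \<cdot> a) \<cdot> (x \<cdot> a \<cdot> x)"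
      using x a by (simp add: mult_assoc)
    also have "\<dots> = x \<cdot> a \<cdot> (x \<cdot> a \<cdot> x)"
      using axa by simp
    also have "\<dots> = x \<cdot> (a \<cdot> x \<cdot> a) \<cdot> x"
      using x a by (simp add: mult_assoc)
    also have "\<dots> = x \<cdot> a \<cdot> x"
      using axa by simp
    finally show ?thesis .
  qed
  ultimately have "x \<cdot> a \<cdot> x \<in> inverses a"
    using x a by (intro inversesI) simp_all
  then show ?thesis by blast
qed

lemma sinv_eq_The: "sinv S (\<cdot>) a = (THE x. x \<in> inverses a)"
  unfolding sinv_def inverses_def by simp

lemma inverse_sgrp_iff: "inverse_sgrp S (\<cdot>) \<longleftrightarrow> (\<forall>a\<in>S. \<exists>!x. x \<in> inverses a)"
  unfolding inverse_sgrp_def inverses_def mem_Collect_eq by (simp only: sgrp simp_thms)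

lemma inverses_unique_if_idems_commute:
  assumes comm: "\<And>e f. e \<in> E \<Longrightarrow> f \<in> E \<Longrightarrow> e \<cdot> f = f \<cdot> e"
    and a: "a \<in> S" and b: "b \<in> inverses a" and c: "c \<in> inverses a"
  shows "b = c"
proof -
  have "b = b \<cdot> a \<cdot> (c \<cdot> a) \<cdot> b"
    using a b c by (simp add: mult_assoc)
  also have "\<dots> = c \<cdot> a \<cdot> (b \<cdot> a) \<cdot> b"
    using comm[of "b \<cdot> a" "c \<cdot> a"] a b c by (simp add: inverse_mult_idems)
  also have "\<dots> = c \<cdot> a \<cdot> b"
    using a b c by (simp add: mult_assoc)
  finally have b_eq: "b = c \<cdot> a \<cdot> b" .
  have "c = c \<cdot> ((a \<cdot> b) \<cdot> (a \<cdot> c))"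
    using a b c by (simp add: mult_assoc)
  also have "\<dots> = c \<cdot> ((a \<cdot> c) \<cdot> (a \<cdot> b))"
    using comm[of "a \<cdot> b" "a \<cdot> c"] a b c by (simp add: inverse_mult_idems)
  also have "\<dots> = c \<cdot> a \<cdot> b"
    using a b c by (simp add: mult_assoc)
  finally have "c = c \<cdot> a \<cdot> b" .
  with b_eq show "b = c"
    by (rule trans[OF _ sym])
qed

lemma inverse_sgrpI:
  assumes "\<And>a. a \<in> S \<Longrightarrow> inverses a \<noteq> {}"
    and "\<And>e f. e \<in> E \<Longrightarrow> f \<in> E \<Longrightarrow> e \<cdot> f = f \<cdot> e"
  shows "inverse_sgrp S (\<cdot>)"
  unfolding inverse_sgrp_iff
proof
  fix a assume a: "a \<in> S"
  then obtain x where x: "x \<in> inverses a"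
    using assms(1) by blast
  show "\<exists>!x. x \<in> inverses a"
  proof (rule ex1I[of _ x])
    show "y = x" if "y \<in> inverses a" for y
      by (rule inverses_unique_if_idems_commute[OF assms(2) a that x])
  qed (rule x)
qed

end

section \<open>Inverse semigroups\<close>

locale inverse_semigroup_on =
  fixes S :: "'a set" and mult :: "'a \<Rightarrow> 'a \<Rightarrow> 'a" (infixl "\<cdot>" 70)
  assumes inverse_sgrp: "inverse_sgrp S (\<cdot>)"

sublocale inverse_semigroup_on \<subseteq> semigroup_on
  by unfold_locales (rule conjunct1[OF inverse_sgrp[unfolded inverse_sgrp_def]])

context inverse_semigroup_on
begin

lemma ex1_inverse: "a \<in> S \<Longrightarrow> \<exists>!x. x \<in> inverses a"
  using inverse_sgrp unfolding inverse_sgrp_iff by (rule bspec)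

lemma sinv_inverses: "a \<in> S \<Longrightarrow> sinv S (\<cdot>) a \<in> inverses a"
  unfolding sinv_eq_The by (rule theI'[OF ex1_inverse])

lemma sinv_closed [simp]: "a \<in> S \<Longrightarrow> sinv S (\<cdot>) a \<in> S"
  by (rule inverses_closed[OF sinv_inverses])

lemma sinv_eqI: "a \<in> S \<Longrightarrow> x \<in> inverses a \<Longrightarrow> sinv S (\<cdot>) a = x"
  unfolding sinv_eq_The by (rule the1_equality[OF ex1_inverse])

lemma inverses_unique:
  assumes "a \<in> S" "x \<in> inverses a" "y \<in> inverses a"
  shows "x = y"
  using sinv_eqI[OF assms(1,2)] sinv_eqI[OF assms(1,3)] by simp

lemma sinv_idem: "e \<in> E \<Longrightarrow> sinv S (\<cdot>) e = e"
  by (rule sinv_eqI) (simp_all add: idem_self_inverse)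

lemma idems_mult_closed:
  assumes e: "e \<in> E" and f: "f \<in> E"
  shows "e \<cdot> f \<in> E"
proof -
  define x where "x = sinv S (\<cdot>) (e \<cdot> f)"
  have x: "x \<in> inverses (e \<cdot> f)"
    unfolding x_def using e f by (simp add: sinv_inverses)
  then have xS: "x \<in> S"
    by simp
  have fxe_inverse: "f \<cdot> x \<cdot> e \<in> inverses (e \<cdot> f)"
  proof (rule inversesI)
    have "e \<cdot> f \<cdot> (f \<cdot> x \<cdot> e) \<cdot> (e \<cdot> f) = e \<cdot> f \<cdot> x \<cdot> (e \<cdot> f)"
      using e f xS by (simp add: mult_assoc)
    then show "e \<cdot> f \<cdot> (f \<cdot> x \<cdot> e) \<cdot> (e \<cdot> f) = e \<cdot> f"
      using x by simp
    have "f \<cdot> x \<cdot> e \<cdot> (e \<cdot> f) \<cdot> (f \<cdot> x \<cdot> e) = f \<cdot> (x \<cdot> (e \<cdot> f) \<cdot> x) \<cdot> e"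
      using e f xS by (simp add: mult_assoc)
    then show "f \<cdot> x \<cdot> e \<cdot> (e \<cdot> f) \<cdot> (f \<cdot> x \<cdot> e) = f \<cdot> x \<cdot> e"
      using x by simp
  qed (use e f xS in simp)
  have fxe: "f \<cdot> x \<cdot> e = x"
    by (rule inverses_unique[OF _ fxe_inverse x]) (use e f in simp)
  have "x \<cdot> x = f \<cdot> (x \<cdot> (e \<cdot> f) \<cdot> x) \<cdot> e"
    using e f xS by (subst (1 2) fxe[symmetric]) (simp add: mult_assoc)
  also have "\<dots> = x"
    using x fxe by simp
  finally have "x \<in> E"
    using xS by (rule idemsI[rotated])
  have "e \<cdot> f \<in> inverses x"
    using inverses_sym x e f by simp
  then have "e \<cdot> f = x"
    using inverses_unique[OF xS] idem_self_inverse[OF \<open>x \<in> E\<close>] by blast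
  then show ?thesis
    using \<open>x \<in> E\<close> by simp
qed

lemma idems_commute:
  assumes e: "e \<in> E" and f: "f \<in> E"
  shows "e \<cdot> f = f \<cdot> e"
proof -
  have ef: "e \<cdot> f \<in> E" and fe: "f \<cdot> e \<in> E"
    using e f idems_mult_closed by auto
  have "e \<cdot> f \<cdot> (f \<cdot> e) \<cdot> (e \<cdot> f) = (e \<cdot> f) \<cdot> (e \<cdot> f)"
    using e f by (simp add: mult_assoc)
  moreover have "f \<cdot> e \<cdot> (e \<cdot> f) \<cdot> (f \<cdot> e) = (f \<cdot> e) \<cdot> (f \<cdot> e)"
    using e f by (simp add: mult_assoc)
  ultimately have "f \<cdot> e \<in> inverses (e \<cdot> f)"
    using ef fe by (intro inversesI) simp_all
  with idem_self_inverse[OF ef] show ?thesis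
    by (rule inverses_unique[rotated]) (use e f in simp)
qed

end

section \<open>Orthodox semigroups\<close>

locale orthodox_semigroup_on =
  fixes S :: "'a set" and mult :: "'a \<Rightarrow> 'a \<Rightarrow> 'a" (infixl "\<cdot>" 70)
  assumes orthodox: "orthodox S (\<cdot>)"

sublocale orthodox_semigroup_on \<subseteq> semigroup_on
  by unfold_locales
    (rule conjunct1[OF conjunct1[OF orthodox[unfolded orthodox_def regular_sgrp_def]]])

context orthodox_semigroup_on
begin

lemma inverses_nonempty: "a \<in> S \<Longrightarrow> inverses a \<noteq> {}"
  by (rule inverses_nonempty_if_regular[OF conjunct1[OF orthodox[unfolded orthodox_def]]])

lemma some_inverse: "x \<in> S \<Longrightarrow> some_elem (inverses x) \<in> inverses x"
  using inverses_nonempty by (rule some_elem_nonempty)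

lemma idems_mult_closed: "e \<in> E \<Longrightarrow> f \<in> E \<Longrightarrow> e \<cdot> f \<in> E"
  using orthodox unfolding orthodox_def by blast

lemma mult_inverses:
  assumes x: "x \<in> S" "x' \<in> inverses x" and y: "y \<in> S" "y' \<in> inverses y"
  shows "y' \<cdot> x' \<in> inverses (x \<cdot> y)"
proof (rule inversesI)
  have g: "x' \<cdot> x \<cdot> (y \<cdot> y') \<in> E" and g': "y \<cdot> y' \<cdot> (x' \<cdot> x) \<in> E"
    using assms by (simp_all add: idems_mult_closed inverse_mult_idems)
  have "x \<cdot> y \<cdot> (y' \<cdot> x') \<cdot> (x \<cdot> y) = x \<cdot> (x' \<cdot> x \<cdot> (y \<cdot> y') \<cdot> (x' \<cdot> x \<cdot> (y \<cdot> y'))) \<cdot> y"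
    using assms by (simp add: mult_assoc)
  also have "\<dots> = x \<cdot> (x' \<cdot> x \<cdot> (y \<cdot> y')) \<cdot> y"
    using g by simp
  also have "\<dots> = x \<cdot> y"
    using assms by (simp add: mult_assoc)
  finally show "x \<cdot> y \<cdot> (y' \<cdot> x') \<cdot> (x \<cdot> y) = x \<cdot> y" .
  have "y' \<cdot> x' \<cdot> (x \<cdot> y) \<cdot> (y' \<cdot> x') = y' \<cdot> (y \<cdot> y' \<cdot> (x' \<cdot> x) \<cdot> (y \<cdot> y' \<cdot> (x' \<cdot> x))) \<cdot> x'"
    using assms by (simp add: mult_assoc)
  also have "\<dots> = y' \<cdot> (y \<cdot> y' \<cdot> (x' \<cdot> x)) \<cdot> x'"
    using g' by simp
  also have "\<dots> = y' \<cdot> x'"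
    using assms by (simp add: mult_assoc)
  finally show "y' \<cdot> x' \<cdot> (x \<cdot> y) \<cdot> (y' \<cdot> x') = y' \<cdot> x'" .
qed (use assms in simp)

lemma inner_inverse_if_common_inverse:
  assumes a: "a \<in> S" and b: "b \<in> S" and x: "x \<in> inverses a" "x \<in> inverses b"
    and d: "d \<in> inverses a"
  shows "b \<cdot> d \<cdot> b = b"
proof -
  have dx: "d \<cdot> a \<cdot> (x \<cdot> b) \<in> E" and bd: "b \<cdot> x \<cdot> (a \<cdot> d) \<in> E"
    using assms by (simp_all add: idems_mult_closed inverse_mult_idems)
  have xb: "x \<cdot> b \<cdot> (d \<cdot> a) \<cdot> (x \<cdot> b) = x \<cdot> b"
  proof -
    have "x \<cdot> b \<cdot> (d \<cdot> a) \<cdot> (x \<cdot> b) = x \<cdot> a \<cdot> (d \<cdot> a \<cdot> (x \<cdot> b) \<cdot> (d \<cdot> a \<cdot> (x \<cdot> b)))"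
      using assms by (simp add: mult_assoc)
    also have "\<dots> = x \<cdot> a \<cdot> (d \<cdot> a \<cdot> (x \<cdot> b))"
      using dx by simp
    also have "\<dots> = x \<cdot> b"
      using assms by (simp add: mult_assoc)
    finally show ?thesis .
  qed
  have bx: "b \<cdot> x \<cdot> (a \<cdot> d) \<cdot> (b \<cdot> x) = b \<cdot> x"
  proof -
    have "b \<cdot> x \<cdot> (a \<cdot> d) \<cdot> (b \<cdot> x) = b \<cdot> x \<cdot> (a \<cdot> d) \<cdot> (b \<cdot> x \<cdot> (a \<cdot> d)) \<cdot> (a \<cdot> x)"
      using assms by (simp add: mult_assoc)
    also have "\<dots> = b \<cdot> x \<cdot> (a \<cdot> d) \<cdot> (a \<cdot> x)"
      using bd by simp
    also have "\<dots> = b \<cdot> x"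
      using assms by (simp add: mult_assoc)
    finally show ?thesis .
  qed
  have "x \<cdot> b \<cdot> d \<cdot> b \<cdot> x = (x \<cdot> b \<cdot> (d \<cdot> a) \<cdot> (x \<cdot> b)) \<cdot> x \<cdot> (b \<cdot> x \<cdot> (a \<cdot> d) \<cdot> (b \<cdot> x))"
    using assms by (simp add: mult_assoc)
  also have "\<dots> = x \<cdot> b \<cdot> x \<cdot> (b \<cdot> x)"
    using xb bx by simp
  also have "\<dots> = x"
    using assms by (simp add: mult_assoc)
  finally have xbdbx: "x \<cdot> b \<cdot> d \<cdot> b \<cdot> x = x" .
  have "b \<cdot> d \<cdot> b = b \<cdot> (x \<cdot> b \<cdot> d \<cdot> b \<cdot> x) \<cdot> b"
    using assms by (simp add: mult_assoc)
  also have "\<dots> = b"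
    using xbdbx x by simp
  finally show ?thesis .
qed

lemma inverses_eq_if_common_inverse:
  assumes "a \<in> S" "b \<in> S" "x \<in> inverses a" "x \<in> inverses b"
  shows "inverses a = inverses b"
proof -
  have sub: "inverses a \<subseteq> inverses b"
    if a: "a \<in> S" and b: "b \<in> S" and x: "x \<in> inverses a" "x \<in> inverses b" for a b x
  proof
    fix d assume d: "d \<in> inverses a"
    have "b \<cdot> d \<cdot> b = b"
      using inner_inverse_if_common_inverse a b x d .
    moreover have "d \<cdot> b \<cdot> d = d"
      using inner_inverse_if_common_inverse[of x d a b] inverses_sym[OF a(1) x(1)] inverses_sym[OF a(1) d]
        inverses_sym[OF b(1) x(2)] x(1) d by simp
    ultimately show "d \<in> inverses b"
      using d by (intro inversesI) simp_all
  qed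
  show ?thesis
    using sub[OF assms] sub[OF assms(2,1,4,3)] by (rule equalityI)
qed

lemma inverses_mult_cong:
  assumes a: "a \<in> S" "a' \<in> S" "inverses a = inverses a'"
    and b: "b \<in> S" "b' \<in> S" "inverses b = inverses b'"
  shows "inverses (a \<cdot> b) = inverses (a' \<cdot> b')"
proof -
  obtain x where x: "x \<in> inverses a"
    using inverses_nonempty[OF a(1)] by blast
  obtain y where y: "y \<in> inverses b"
    using inverses_nonempty[OF b(1)] by blast
  have "y \<cdot> x \<in> inverses (a \<cdot> b)"
    using mult_inverses[OF a(1) x b(1) y] .
  moreover have "y \<cdot> x \<in> inverses (a' \<cdot> b')"
    using mult_inverses[of a' x b' y] x y a b by simp
  ultimately show ?thesis
    by (rule inverses_eq_if_common_inverse[rotated 2]) (use a b in simp_all)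
qed

lemma idem_if_inverses_square_eq:
  assumes u: "u \<in> S" and sq: "inverses (u \<cdot> u) = inverses u"
  shows "u \<in> E"
proof -
  obtain w where w: "w \<in> inverses u"
    using inverses_nonempty u by blast
  have "w \<cdot> u \<cdot> (u \<cdot> w) = w \<cdot> (u \<cdot> u) \<cdot> w"
    using u w by (simp add: mult_assoc)
  also have "\<dots> = w"
    using w sq inverse_eqs(2)[of w "u \<cdot> u"] by simp
  finally have wuuw: "w \<cdot> u \<cdot> (u \<cdot> w) = w" .
  have "w \<cdot> u \<cdot> (u \<cdot> w) \<in> E"
    using u w by (simp add: idems_mult_closed inverse_mult_idems)
  then have ww: "w \<cdot> w = w"
    using wuuw by simp
  have "u \<cdot> w \<cdot> (w \<cdot> u) = u \<cdot> (w \<cdot> w) \<cdot> u"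
    using u w by (simp add: mult_assoc)
  also have "\<dots> = u"
    using ww w by simp
  finally have "u \<cdot> w \<cdot> (w \<cdot> u) = u" .
  moreover have "u \<cdot> w \<cdot> (w \<cdot> u) \<in> E"
    using u w by (simp add: idems_mult_closed inverse_mult_idems)
  ultimately show ?thesis
    by simp
qed

lemma inverses_idems_commute:
  assumes e: "e \<in> E" and f: "f \<in> E"
  shows "inverses (e \<cdot> f) = inverses (f \<cdot> e)"
proof -
  have ef: "e \<cdot> f \<in> E" and fe: "f \<cdot> e \<in> E"
    using e f idems_mult_closed by auto
  have "f \<cdot> e \<cdot> (e \<cdot> f) \<cdot> (f \<cdot> e) = (f \<cdot> e) \<cdot> (f \<cdot> e) \<and> e \<cdot> f \<cdot> (f \<cdot> e) \<cdot> (e \<cdot> f) = (e \<cdot> f) \<cdot> (e \<cdot> f)"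
    using e f by (simp add: mult_assoc)
  then have ef_inverse: "e \<cdot> f \<in> inverses (f \<cdot> e)"
    using ef fe by (intro inversesI) simp_all
  show ?thesis
    by (rule inverses_eq_if_common_inverse[OF _ _ idem_self_inverse[OF ef] ef_inverse])
      (use ef fe in simp_all)
qed

(* The gamma-class of x is represented by the set V(x) itself. *)
definition gamma_quot :: "'a set set" where
  "gamma_quot = inverses ` S"

definition gamma_rep :: "'a set \<Rightarrow> 'a" where
  "gamma_rep P = (SOME x. x \<in> S \<and> inverses x = P)"

definition gamma_mult :: "'a set \<Rightarrow> 'a set \<Rightarrow> 'a set" where
  "gamma_mult P Q = inverses (gamma_rep P \<cdot> gamma_rep Q)"

lemma gamma_rep:
  assumes "x \<in> S"
  shows "gamma_rep (inverses x) \<in> S" "inverses (gamma_rep (inverses x)) = inverses x"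
proof -
  have "gamma_rep (inverses x) \<in> S \<and> inverses (gamma_rep (inverses x)) = inverses x"
    unfolding gamma_rep_def by (rule someI[of _ x]) (use assms in simp)
  then show "gamma_rep (inverses x) \<in> S" "inverses (gamma_rep (inverses x)) = inverses x"
    by simp_all
qed

lemma gamma_mult_inverses [simp]:
  "x \<in> S \<Longrightarrow> y \<in> S \<Longrightarrow> gamma_mult (inverses x) (inverses y) = inverses (x \<cdot> y)"
  unfolding gamma_mult_def by (rule inverses_mult_cong) (simp_all add: gamma_rep)

sublocale gamma: semigroup_on gamma_quot gamma_mult
  by unfold_locales (auto simp: sgrp_def gamma_quot_def mult_assoc)

lemma gamma_inverses: "x \<in> S \<Longrightarrow> x' \<in> inverses x \<Longrightarrow> inverses x' \<in> gamma.inverses (inverses x)"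
  by (rule gamma.inversesI) (auto simp: gamma_quot_def)

lemma gamma_inverse_sgrp: "inverse_sgrp gamma_quot gamma_mult"
proof (rule gamma.inverse_sgrpI)
  fix P assume "P \<in> gamma_quot"
  then obtain x where x: "x \<in> S" "P = inverses x"
    unfolding gamma_quot_def by blast
  obtain x' where "x' \<in> inverses x"
    using inverses_nonempty x(1) by blast
  then show "gamma.inverses P \<noteq> {}"
    using gamma_inverses x by blast
next
  have idem: "u \<in> E" if "inverses u \<in> gamma.E" "u \<in> S" for u
  proof (rule idem_if_inverses_square_eq[OF that(2)])
    show "inverses (u \<cdot> u) = inverses u"
      using gamma.idem_simps(1)[OF that(1)] that(2) by simp
  qed
  fix P Q assume "P \<in> gamma.E" "Q \<in> gamma.E"
  moreover obtain u v where "u \<in> S" "P = inverses u" "v \<in> S" "Q = inverses v"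
    using gamma.idems_closed[OF calculation(1)] gamma.idems_closed[OF calculation(2)]
    unfolding gamma_quot_def by blast
  ultimately show "gamma_mult P Q = gamma_mult Q P"
    using idem inverses_idems_commute by simp
qed

sublocale gamma: inverse_semigroup_on gamma_quot gamma_mult
  by unfold_locales (rule gamma_inverse_sgrp)

lemma gamma_sinv:
  assumes "x \<in> S" "x' \<in> inverses x"
  shows "sinv gamma_quot gamma_mult (inverses x) = inverses x'"
proof (rule gamma.sinv_eqI)
  show "inverses x \<in> gamma_quot"
    using assms(1) unfolding gamma_quot_def by blast
  show "inverses x' \<in> gamma.inverses (inverses x)"
    using gamma_inverses assms .
qed

end

section \<open>Generalized inverse semigroups\<close>

locale gen_inverse_semigroup_on =
  fixes S :: "'a set" and mult :: "'a \<Rightarrow> 'a \<Rightarrow> 'a" (infixl "\<cdot>" 70)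
  assumes generalized_inverse: "generalized_inverse S (\<cdot>)"

sublocale gen_inverse_semigroup_on \<subseteq> orthodox_semigroup_on
  by unfold_locales (rule conjunct1[OF generalized_inverse[unfolded generalized_inverse_def]])

context gen_inverse_semigroup_on
begin

lemma normal:
  assumes "e \<in> E" "f \<in> E" "g \<in> E"
  shows "e \<cdot> f \<cdot> g \<cdot> e = e \<cdot> g \<cdot> f \<cdot> e"
proof -
  have "\<forall>e\<in>E. \<forall>f\<in>E. \<forall>g\<in>E. e \<cdot> f \<cdot> g \<cdot> e = e \<cdot> g \<cdot> f \<cdot> e"
    using generalized_inverse unfolding generalized_inverse_def by (rule conjunct2)
  then show ?thesis
    using assms by blast
qed

lemma dual: "gen_inverse_semigroup_on S (\<lambda>x y. y \<cdot> x)"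
proof -
  have idems_dual: "idems S (\<lambda>x y. y \<cdot> x) = E"
    unfolding idems_def by simp
  have "sgrp S (\<lambda>x y. y \<cdot> x)"
    unfolding sgrp_def by (simp add: mult_assoc)
  moreover have "\<exists>x\<in>S. a \<cdot> (x \<cdot> a) = a" if a: "a \<in> S" for a
  proof -
    obtain x where "x \<in> inverses a"
      using inverses_nonempty[OF a] by blast
    then show ?thesis
      using a by (intro bexI[of _ x]) simp_all
  qed
  moreover have "e \<cdot> (g \<cdot> (f \<cdot> e)) = e \<cdot> (f \<cdot> (g \<cdot> e))" if "e \<in> E" "f \<in> E" "g \<in> E" for e f g
    using normal[OF that(1,3,2)] that by (simp add: mult_assoc)
  ultimately show ?thesis
    unfolding gen_inverse_semigroup_on_def generalized_inverse_def orthodox_def regular_sgrp_def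
      idems_dual
    by (simp add: idems_mult_closed)
qed

(* The hypotheses on p and q say that they are R-related idempotents.  This is where
   normality of the band of idempotents is used. *)
lemma idem_mult_eq_if_idems_R:
  assumes p: "p \<in> E" and q: "q \<in> E" and g: "g \<in> E" and pq: "p \<cdot> q = q" and qp: "q \<cdot> p = p"
  shows "p \<cdot> g = q \<cdot> g"
proof -
  have pg: "p \<cdot> g \<in> E" and qg: "q \<cdot> g \<in> E"
    using p q g idems_mult_closed by auto
  have "p \<cdot> g \<cdot> (q \<cdot> g) = p \<cdot> g \<cdot> (p \<cdot> q \<cdot> g)"
    using pq by simp
  also have "\<dots> = p \<cdot> (g \<cdot> p \<cdot> q \<cdot> g)"
    using p q g by (simp add: mult_assoc)
  also have "\<dots> = p \<cdot> (g \<cdot> q \<cdot> p \<cdot> g)"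
    using normal[OF g p q] by simp
  also have "\<dots> = p \<cdot> g \<cdot> (q \<cdot> p) \<cdot> g"
    using p q g by (simp add: mult_assoc)
  also have "\<dots> = p \<cdot> g \<cdot> (p \<cdot> g)"
    using qp p g by (simp add: mult_assoc)
  also have "\<dots> = p \<cdot> g"
    using pg by simp
  finally have pgqg: "p \<cdot> g \<cdot> (q \<cdot> g) = p \<cdot> g" .
  have "q \<cdot> g = p \<cdot> q \<cdot> g \<cdot> (p \<cdot> q \<cdot> g)"
    using qg pq by simp
  also have "\<dots> = p \<cdot> (q \<cdot> g \<cdot> p \<cdot> q) \<cdot> g"
    using p q g by (simp add: mult_assoc)
  also have "\<dots> = p \<cdot> (q \<cdot> p \<cdot> g \<cdot> q) \<cdot> g"
    using normal[OF q g p] by simp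
  also have "\<dots> = p \<cdot> q \<cdot> p \<cdot> g \<cdot> (q \<cdot> g)"
    using p q g by (simp add: mult_assoc)
  also have "\<dots> = p \<cdot> g"
    using pq qp pgqg by simp
  finally show ?thesis
    by (rule sym)
qed

lemma mult_eq_if_idems_R:
  assumes p: "p \<in> E" and q: "q \<in> E" and pq: "p \<cdot> q = q" and qp: "q \<cdot> p = p" and u: "u \<in> S"
  shows "p \<cdot> u = q \<cdot> u"
proof -
  obtain u' where u': "u' \<in> inverses u"
    using inverses_nonempty u by blast
  have "p \<cdot> u = p \<cdot> (u \<cdot> u') \<cdot> u"
    using p u u' by (simp add: mult_assoc)
  also have "\<dots> = q \<cdot> (u \<cdot> u') \<cdot> u"
    using idem_mult_eq_if_idems_R[OF p q inverse_mult_idems(1)[OF u u'] pq qp] by simp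
  also have "\<dots> = q \<cdot> u"
    using q u u' by (simp add: mult_assoc)
  finally show ?thesis .
qed

lemma mult_eq_if_idems_L:
  assumes "p \<in> E" "q \<in> E" "p \<cdot> q = p" "q \<cdot> p = q" "u \<in> S"
  shows "u \<cdot> p = u \<cdot> q"
proof -
  interpret dual: gen_inverse_semigroup_on S "\<lambda>x y. y \<cdot> x"
    by (rule dual)
  have "idems S (\<lambda>x y. y \<cdot> x) = E"
    unfolding idems_def by simp
  then show ?thesis
    using dual.mult_eq_if_idems_R[of p q u] assms by simp
qed

lemma mult_eq_if_inverses_eq:
  assumes x: "x \<in> S" and y: "y \<in> S" and xy: "inverses x = inverses y" and z: "z \<in> S" and u: "u \<in> S"
  shows "z \<cdot> x \<cdot> u = z \<cdot> y \<cdot> u"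
proof -
  obtain c where c: "c \<in> inverses x"
    using inverses_nonempty x by blast
  have c': "c \<in> inverses y"
    using c xy by simp
  have L: "z \<cdot> (y \<cdot> c) = z \<cdot> (x \<cdot> c)"
    by (rule mult_eq_if_idems_L) (use x y c c' z in \<open>simp_all add: inverse_mult_idems mult_assoc\<close>)
  have R: "c \<cdot> y \<cdot> u = c \<cdot> x \<cdot> u"
    by (rule mult_eq_if_idems_R) (use x y c c' u in \<open>simp_all add: inverse_mult_idems mult_assoc\<close>)
  have "z \<cdot> y \<cdot> u = z \<cdot> (y \<cdot> c) \<cdot> x \<cdot> (c \<cdot> y \<cdot> u)"
    using x y c c' z u by (simp add: mult_assoc)
  also have "\<dots> = z \<cdot> (x \<cdot> c) \<cdot> x \<cdot> (c \<cdot> x \<cdot> u)"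
    using L R by simp
  also have "\<dots> = z \<cdot> x \<cdot> u"
    using x c z u by (simp add: mult_assoc)
  finally show ?thesis
    by (rule sym)
qed

end

section \<open>The embedding into a lambda-semidirect product\<close>

definition rect_mult :: "'b \<times> 'c \<Rightarrow> 'b \<times> 'c \<Rightarrow> 'b \<times> 'c" where
  "rect_mult p q = (fst p, snd q)"

lemma rectangular_band_rect_mult: "rectangular_band (A \<times> B) rect_mult"
  unfolding rectangular_band_def sgrp_def rect_mult_def by auto

context semigroup_on
begin

definition lmult_class :: "'a \<Rightarrow> 'a set" where
  "lmult_class z = {w \<in> S. \<forall>u\<in>S. w \<cdot> u = z \<cdot> u}"

definition rmult_class :: "'a \<Rightarrow> 'a set" where
  "rmult_class z = {w \<in> S. \<forall>u\<in>S. u \<cdot> w = u \<cdot> z}"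

lemma lmult_class_eq_iff:
  "z \<in> S \<Longrightarrow> w \<in> S \<Longrightarrow> lmult_class z = lmult_class w \<longleftrightarrow> (\<forall>u\<in>S. z \<cdot> u = w \<cdot> u)"
  unfolding lmult_class_def by auto

lemma rmult_class_eq_iff:
  "z \<in> S \<Longrightarrow> w \<in> S \<Longrightarrow> rmult_class z = rmult_class w \<longleftrightarrow> (\<forall>u\<in>S. u \<cdot> z = u \<cdot> w)"
  unfolding rmult_class_def by auto

lemma lmult_class_some_elem:
  assumes "z \<in> S"
  shows "some_elem (lmult_class z) \<in> S" "lmult_class (some_elem (lmult_class z)) = lmult_class z"
proof -
  have "some_elem (lmult_class z) \<in> lmult_class z"
    using assms by (intro some_elem_nonempty) (auto simp: lmult_class_def)
  then show "some_elem (lmult_class z) \<in> S" "lmult_class (some_elem (lmult_class z)) = lmult_class z"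
    using assms by (auto simp: lmult_class_def)
qed

lemma rmult_class_some_elem:
  assumes "z \<in> S"
  shows "some_elem (rmult_class z) \<in> S" "rmult_class (some_elem (rmult_class z)) = rmult_class z"
proof -
  have "some_elem (rmult_class z) \<in> rmult_class z"
    using assms by (intro some_elem_nonempty) (auto simp: rmult_class_def)
  then show "some_elem (rmult_class z) \<in> S" "rmult_class (some_elem (rmult_class z)) = rmult_class z"
    using assms by (auto simp: rmult_class_def)
qed

end

context gen_inverse_semigroup_on
begin

lemma lmult_class_mult_cong:
  assumes z: "z \<in> S" "z' \<in> S" "lmult_class z = lmult_class z'"
    and s: "s \<in> S" "s' \<in> S" "inverses s = inverses s'"
  shows "lmult_class (z \<cdot> s) = lmult_class (z' \<cdot> s')"
proof -
  have "z \<cdot> s \<cdot> u = z' \<cdot> s' \<cdot> u" if u: "u \<in> S" for u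
  proof -
    have "z \<cdot> s \<cdot> u = z \<cdot> (s \<cdot> u)"
      using z s u by (simp add: mult_assoc)
    also have "\<dots> = z' \<cdot> (s \<cdot> u)"
      using z s u lmult_class_eq_iff by simp
    also have "\<dots> = z' \<cdot> s' \<cdot> u"
      using mult_eq_if_inverses_eq[OF s z(2) u] z s u by (simp add: mult_assoc)
    finally show ?thesis .
  qed
  then show ?thesis
    using z s by (subst lmult_class_eq_iff) simp_all
qed

lemma rmult_class_mult_cong:
  assumes x: "x \<in> S" "x' \<in> S" "inverses x = inverses x'"
    and y: "y \<in> S" "y' \<in> S" "rmult_class y = rmult_class y'"
  shows "rmult_class (x \<cdot> y) = rmult_class (x' \<cdot> y')"
proof -
  have "u \<cdot> (x \<cdot> y) = u \<cdot> (x' \<cdot> y')" if u: "u \<in> S" for u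
  proof -
    have "u \<cdot> (x \<cdot> y) = u \<cdot> x \<cdot> y"
      using x y u by (simp add: mult_assoc)
    also have "\<dots> = u \<cdot> x \<cdot> y'"
      using x y u rmult_class_eq_iff by simp
    also have "\<dots> = u \<cdot> (x' \<cdot> y')"
      using mult_eq_if_inverses_eq[OF x u y(2)] x y u by (simp add: mult_assoc)
    finally show ?thesis .
  qed
  then show ?thesis
    using x y by (subst rmult_class_eq_iff) simp_all
qed

definition pair_band :: "('a set \<times> 'a set) set" where
  "pair_band = lmult_class ` S \<times> rmult_class ` S"

(* For P = V(x), some_elem P is an inverse of x and gamma_rep P has the same inverses as x;
   by the two congruence lemmas above these choices do not matter. *)
definition gamma_act :: "'a set \<Rightarrow> 'a set \<times> 'a set \<Rightarrow> 'a set \<times> 'a set" where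
  "gamma_act P k =
     (lmult_class (some_elem (fst k) \<cdot> some_elem P), rmult_class (gamma_rep P \<cdot> some_elem (snd k)))"

lemma gamma_act_classes:
  assumes x: "x \<in> S" and s: "s \<in> inverses x" and z: "z \<in> S" and y: "y \<in> S"
  shows "gamma_act (inverses x) (lmult_class z, rmult_class y)
    = (lmult_class (z \<cdot> s), rmult_class (x \<cdot> y))"
proof -
  have s0: "some_elem (inverses x) \<in> inverses x"
    using some_inverse x .
  have "inverses (some_elem (inverses x)) = inverses s"
    by (rule inverses_eq_if_common_inverse[OF _ _ inverses_sym[OF x s0] inverses_sym[OF x s]])
      (use s s0 in simp_all)
  then have "lmult_class (some_elem (lmult_class z) \<cdot> some_elem (inverses x)) = lmult_class (z \<cdot> s)"
    by (rule lmult_class_mult_cong[rotated 5]) (use lmult_class_some_elem[OF z] z s s0 in simp_all)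
  moreover have "rmult_class (gamma_rep (inverses x) \<cdot> some_elem (rmult_class y)) = rmult_class (x \<cdot> y)"
    by (rule rmult_class_mult_cong)
      (use gamma_rep[OF x] rmult_class_some_elem[OF y] x y in simp_all)
  ultimately show ?thesis
    unfolding gamma_act_def by simp
qed

lemma gamma_act_action: "sgrp_action pair_band rect_mult gamma_quot gamma_mult gamma_act"
  unfolding sgrp_action_def
proof (intro conjI ballI)
  fix P k assume "P \<in> gamma_quot" "k \<in> pair_band"
  then obtain x z y where x: "x \<in> S" "P = inverses x" and zy: "z \<in> S" "y \<in> S"
    "k = (lmult_class z, rmult_class y)"
    unfolding gamma_quot_def pair_band_def by blast
  have "gamma_act P k = (lmult_class (z \<cdot> some_elem (inverses x)), rmult_class (x \<cdot> y))"
    using gamma_act_classes[OF x(1) some_inverse[OF x(1)] zy(1,2)] x zy by simp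
  then show "gamma_act P k \<in> pair_band"
    using some_inverse[OF x(1)] x zy unfolding pair_band_def by simp
next
  fix P k l
  show "gamma_act P (rect_mult k l) = rect_mult (gamma_act P k) (gamma_act P l)"
    unfolding gamma_act_def rect_mult_def by simp
next
  fix P Q k assume "P \<in> gamma_quot" "Q \<in> gamma_quot" "k \<in> pair_band"
  then obtain p q z y where pq: "p \<in> S" "P = inverses p" "q \<in> S" "Q = inverses q"
    and zy: "z \<in> S" "y \<in> S" "k = (lmult_class z, rmult_class y)"
    unfolding gamma_quot_def pair_band_def by blast
  obtain p' q' where p': "p' \<in> inverses p" and q': "q' \<in> inverses q"
    using some_inverse pq by blast
  have "gamma_act (gamma_mult P Q) k = (lmult_class (z \<cdot> (q' \<cdot> p')), rmult_class (p \<cdot> q \<cdot> y))"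
    using gamma_act_classes[OF _ mult_inverses[OF pq(1) p' pq(3) q']] pq zy by simp
  moreover have "gamma_act P (gamma_act Q k) = (lmult_class (z \<cdot> q' \<cdot> p'), rmult_class (p \<cdot> (q \<cdot> y)))"
    using gamma_act_classes p' q' pq zy by simp
  ultimately show "gamma_act (gamma_mult P Q) k = gamma_act P (gamma_act Q k)"
    using pq zy p' q' by (simp add: mult_assoc)
qed

definition embed :: "'a \<Rightarrow> ('a set \<times> 'a set) \<times> 'a set" where
  "embed x = ((lmult_class (x \<cdot> some_elem (inverses x)), rmult_class x), inverses x)"

lemma embed_lsd_carrier:
  assumes x: "x \<in> S"
  shows "embed x \<in> lsd_carrier pair_band gamma_quot gamma_mult gamma_act"
proof -
  define r where "r = some_elem (inverses x)"
  have r: "r \<in> inverses x"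
    unfolding r_def using some_inverse x .
  have xr: "x \<cdot> r \<in> E"
    using inverse_mult_idems x r by blast
  have "gamma_mult (inverses x) (sinv gamma_quot gamma_mult (inverses x)) = inverses (x \<cdot> r)"
    using gamma_sinv x r by simp
  moreover have "gamma_act (inverses (x \<cdot> r)) (lmult_class (x \<cdot> r), rmult_class x)
      = (lmult_class (x \<cdot> r), rmult_class x)"
    using gamma_act_classes[OF _ idem_self_inverse[OF xr]] xr x r by (simp add: mult_assoc)
  ultimately show ?thesis
    unfolding embed_def lsd_carrier_def pair_band_def gamma_quot_def r_def[symmetric]
    using x r by auto
qed

lemma embed_mult:
  assumes x: "x \<in> S" and y: "y \<in> S"
  shows "embed (x \<cdot> y) = lsd_mult rect_mult gamma_quot gamma_mult gamma_act (embed x) (embed y)"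
proof -
  define r r' w where "r = some_elem (inverses x)" and "r' = some_elem (inverses y)"
    and "w = some_elem (inverses (x \<cdot> y))"
  have r: "r \<in> inverses x" and r': "r' \<in> inverses y" and w: "w \<in> inverses (x \<cdot> y)"
    unfolding r_def r'_def w_def using some_inverse x y by simp_all
  have e: "x \<cdot> y \<cdot> w \<in> E"
    using inverse_mult_idems x y w by simp
  have "gamma_mult (gamma_mult (inverses x) (inverses y))
      (sinv gamma_quot gamma_mult (gamma_mult (inverses x) (inverses y))) = inverses (x \<cdot> y \<cdot> w)"
    using gamma_sinv x y w by simp
  moreover have "gamma_act (inverses (x \<cdot> y \<cdot> w)) (lmult_class (x \<cdot> r), rmult_class x)
      = (lmult_class (x \<cdot> y \<cdot> w), rmult_class (x \<cdot> y \<cdot> w \<cdot> x))"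
    using gamma_act_classes[OF _ idem_self_inverse[OF e]] e x y w r by (simp add: mult_assoc)
  moreover have "gamma_act (inverses x) (lmult_class (y \<cdot> r'), rmult_class y)
      = (lmult_class (y \<cdot> r' \<cdot> r), rmult_class (x \<cdot> y))"
    using gamma_act_classes x y r r' by simp
  ultimately show ?thesis
    unfolding embed_def lsd_mult_def rect_mult_def r_def[symmetric] r'_def[symmetric] w_def[symmetric]
    using x y by simp
qed

lemma embed_inj: "inj_on embed S"
proof
  fix x y assume x: "x \<in> S" and y: "y \<in> S" and eq: "embed x = embed y"
  define r r' where "r = some_elem (inverses x)" and "r' = some_elem (inverses y)"
  have r: "r \<in> inverses x" and r': "r' \<in> inverses y"
    unfolding r_def r'_def using some_inverse x y by simp_all
  have "((lmult_class (x \<cdot> r), rmult_class x), inverses x)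
      = ((lmult_class (y \<cdot> r'), rmult_class y), inverses y)"
    using eq unfolding embed_def r_def r'_def .
  then have L: "lmult_class (x \<cdot> r) = lmult_class (y \<cdot> r')" and R: "rmult_class x = rmult_class y"
    by simp_all
  have "x = x \<cdot> r \<cdot> x"
    using r by simp
  also have "\<dots> = x \<cdot> r \<cdot> y"
    using R x y r rmult_class_eq_iff by simp
  also have "\<dots> = y \<cdot> r' \<cdot> y"
    using L x y r r' lmult_class_eq_iff by simp
  also have "\<dots> = y"
    using r' by simp
  finally show "x = y" .
qed

theorem embeds_in_lsd_gamma:
  "embeds_in_lsd S (\<cdot>) pair_band rect_mult gamma_quot gamma_mult gamma_act"
  unfolding embeds_in_lsd_def pair_band_def
  using rectangular_band_rect_mult gamma_inverse_sgrp gamma_act_action[unfolded pair_band_def]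
    embed_inj embed_lsd_carrier[unfolded pair_band_def] embed_mult
  by blast

end

section \<open>Idempotents of a lambda-semidirect product\<close>

locale lsd_context =
  fixes K :: "'k set" and km :: "'k \<Rightarrow> 'k \<Rightarrow> 'k"
    and T :: "'t set" and tm :: "'t \<Rightarrow> 't \<Rightarrow> 't" and act :: "'t \<Rightarrow> 'k \<Rightarrow> 'k"
  assumes band: "rectangular_band K km"
    and inverse: "inverse_sgrp T tm"
    and action: "sgrp_action K km T tm act"

sublocale lsd_context \<subseteq> T: inverse_semigroup_on T tm
  by unfold_locales (rule inverse)

context lsd_context
begin

lemma km_closed [simp]: "a \<in> K \<Longrightarrow> b \<in> K \<Longrightarrow> km a b \<in> K"
  using band unfolding rectangular_band_def sgrp_def by blast

lemma km_idem [simp]: "a \<in> K \<Longrightarrow> km a a = a"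
  using band unfolding rectangular_band_def by blast

lemma km_rect [simp]: "a \<in> K \<Longrightarrow> b \<in> K \<Longrightarrow> c \<in> K \<Longrightarrow> km (km a b) c = km a c"
  using band unfolding rectangular_band_def by blast

lemma act_closed [simp]: "t \<in> T \<Longrightarrow> a \<in> K \<Longrightarrow> act t a \<in> K"
  using action unfolding sgrp_action_def by blast

lemma act_km [simp]: "t \<in> T \<Longrightarrow> a \<in> K \<Longrightarrow> b \<in> K \<Longrightarrow> act t (km a b) = km (act t a) (act t b)"
  using action unfolding sgrp_action_def by blast

lemma act_act [simp]: "t \<in> T \<Longrightarrow> u \<in> T \<Longrightarrow> a \<in> K \<Longrightarrow> act t (act u a) = act (tm t u) a"
  using action unfolding sgrp_action_def by simp

abbreviation lmult :: "'k \<times> 't \<Rightarrow> 'k \<times> 't \<Rightarrow> 'k \<times> 't" where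
  "lmult \<equiv> lsd_mult km T tm act"

definition fixed_idem_pairs :: "('k \<times> 't) set" where
  "fixed_idem_pairs = {(a, t). a \<in> K \<and> t \<in> T.E \<and> act t a = a}"

lemma fixed_idem_pairsD:
  assumes "(a, t) \<in> fixed_idem_pairs"
  shows "a \<in> K" "t \<in> T.E" "act t a = a"
  using assms unfolding fixed_idem_pairs_def by simp_all

lemma lsd_idem_fixed:
  assumes p: "p \<in> lsd_carrier K T tm act" and idem: "lmult p p = p"
  shows "p \<in> fixed_idem_pairs"
proof -
  obtain a t where pat: "p = (a, t)" and a: "a \<in> K" and t: "t \<in> T"
    and fix_a: "act (tm t (sinv T tm t)) a = a"
    using p unfolding lsd_carrier_def by blast
  have "tm t t = t"
    using idem pat by (simp add: lsd_mult_def)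
  then have "t \<in> T.E"
    by (rule T.idemsI[OF t])
  then show ?thesis
    using fix_a a pat T.sinv_idem unfolding fixed_idem_pairs_def by simp
qed

lemma lmult_fixed_idem_pairs:
  assumes p: "(a, t) \<in> fixed_idem_pairs" and q: "(b, u) \<in> fixed_idem_pairs"
  shows "lmult (a, t) (b, u) = (km (act (tm t u) a) (act t b), tm t u)"
    and "lmult (a, t) (b, u) \<in> fixed_idem_pairs"
proof -
  note a = fixed_idem_pairsD[OF p] and b = fixed_idem_pairsD[OF q]
  have tu: "tm t u \<in> T.E"
    by (rule T.idems_mult_closed[OF a(2) b(2)])
  show eq: "lmult (a, t) (b, u) = (km (act (tm t u) a) (act t b), tm t u)"
    using tu T.sinv_idem by (simp add: lsd_mult_def)
  have "tm (tm t u) t = tm t u"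
    using a b T.idems_commute[OF a(2) b(2)] by (simp add: T.mult_assoc)
  then have "act (tm t u) (act t b) = act (tm t u) b"
    using a b by simp
  also have "\<dots> = act t (act u b)"
    by (rule act_act[symmetric]) (use a b in simp_all)
  also have "\<dots> = act t b"
    by (simp only: b(3))
  finally have "act (tm t u) (act t b) = act t b" .
  then show "lmult (a, t) (b, u) \<in> fixed_idem_pairs"
    unfolding eq fixed_idem_pairs_def using a b tu by (simp add: T.mult_assoc)
qed

lemma lmult_fixed_idem_pair_idem:
  assumes "p \<in> fixed_idem_pairs"
  shows "lmult p p = p"
proof -
  obtain a t where p: "p = (a, t)"
    by fastforce
  show ?thesis
    using lmult_fixed_idem_pairs(1)[of a t a t] fixed_idem_pairsD[of a t] assms unfolding p by simp
qed

lemma lmult_fixed_idem_pairs_sandwich: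
  assumes p: "(a, t) \<in> fixed_idem_pairs" and q: "(b, u) \<in> fixed_idem_pairs"
    and r: "(c, w) \<in> fixed_idem_pairs"
  shows "lmult (lmult (lmult (a, t) (b, u)) (c, w)) (a, t) = (act (tm (tm t u) w) a, tm (tm t u) w)"
proof -
  note a = fixed_idem_pairsD[OF p] and b = fixed_idem_pairsD[OF q] and c = fixed_idem_pairsD[OF r]
  define x v where "x = tm t u" and "v = tm x w"
  have x: "x \<in> T.E" and v: "v \<in> T.E"
    unfolding x_def v_def using a b c T.idems_mult_closed by simp_all
  have vx: "tm v x = v"
    unfolding v_def using x c T.idems_commute[OF x c(2)] by (simp add: T.mult_assoc)
  have vt: "tm v t = v"
  proof -
    have "tm v t = tm x (tm t w)"
      unfolding v_def using x a c T.idems_commute[OF a(2) c(2)] by (simp add: T.mult_assoc)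
    also have "\<dots> = v"
      unfolding v_def x_def using a b c T.idems_commute[OF a(2) b(2)] by (simp add: T.mult_assoc)
    finally show ?thesis .
  qed
  have "lmult (a, t) (b, u) = (km (act x a) (act t b), x)"
    and ab: "(km (act x a) (act t b), x) \<in> fixed_idem_pairs"
    using lmult_fixed_idem_pairs[OF p q] unfolding x_def by simp_all
  moreover have "lmult (km (act x a) (act t b), x) (c, w) = (km (act v a) (act x c), v)"
    and abc: "(km (act v a) (act x c), v) \<in> fixed_idem_pairs"
    using lmult_fixed_idem_pairs[OF ab r] a b c x v vx unfolding v_def[symmetric] by simp_all
  moreover have "lmult (km (act v a) (act x c), v) (a, t) = (act v a, v)"
    using lmult_fixed_idem_pairs[OF abc p] a c x v vt by simp
  ultimately show ?thesis
    unfolding v_def x_def by simp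
qed

lemma fixed_idem_pairs_mult_closed:
  "p \<in> fixed_idem_pairs \<Longrightarrow> q \<in> fixed_idem_pairs \<Longrightarrow> lmult p q \<in> fixed_idem_pairs"
  using lmult_fixed_idem_pairs(2) by (metis prod.exhaust)

lemma fixed_idem_pairs_normal:
  assumes "p \<in> fixed_idem_pairs" "q \<in> fixed_idem_pairs" "r \<in> fixed_idem_pairs"
  shows "lmult (lmult (lmult p q) r) p = lmult (lmult (lmult p r) q) p"
proof -
  obtain a t b u c w where abc: "p = (a, t)" "q = (b, u)" "r = (c, w)"
    by (metis prod.exhaust)
  note fixed = assms[unfolded abc]
  have "tm (tm t u) w = tm (tm t w) u"
    using fixed_idem_pairsD[OF fixed(1)] fixed_idem_pairsD[OF fixed(2)] fixed_idem_pairsD[OF fixed(3)]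
      T.idems_commute[of u w] by (simp add: T.mult_assoc)
  then show ?thesis
    unfolding abc lmult_fixed_idem_pairs_sandwich[OF fixed]
      lmult_fixed_idem_pairs_sandwich[OF fixed(1,3,2)] by simp
qed

end

lemma generalized_inverse_if_embeds_in_lsd:
  assumes reg: "regular_sgrp S m" and E: "embeds_in_lsd S m K km T tm act"
  shows "generalized_inverse S m"
proof -
  interpret lsd_context K km T tm act
    using E unfolding embeds_in_lsd_def by unfold_locales blast+
  interpret S: semigroup_on S m
    by unfold_locales (rule conjunct1[OF reg[unfolded regular_sgrp_def]])
  obtain \<phi> where inj: "inj_on \<phi> S" and car: "\<phi> ` S \<subseteq> lsd_carrier K T tm act"
    and hom: "\<forall>x\<in>S. \<forall>y\<in>S. \<phi> (m x y) = lmult (\<phi> x) (\<phi> y)"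
    using E unfolding embeds_in_lsd_def by blast
  have fixed: "\<phi> e \<in> fixed_idem_pairs" if e: "e \<in> S.E" for e
  proof (rule lsd_idem_fixed)
    show "\<phi> e \<in> lsd_carrier K T tm act"
      using car e by auto
    have "\<phi> (m e e) = lmult (\<phi> e) (\<phi> e)"
      using hom S.idems_closed[OF e] by blast
    then show "lmult (\<phi> e) (\<phi> e) = \<phi> e"
      using S.idem_simps(1)[OF e] by simp
  qed
  have closed: "m e f \<in> S.E" if e: "e \<in> S.E" and f: "f \<in> S.E" for e f
  proof (rule S.idemsI)
    have "\<phi> (m (m e f) (m e f)) = \<phi> (m e f)"
      using hom e f lmult_fixed_idem_pair_idem[OF fixed_idem_pairs_mult_closed[OF fixed[OF e] fixed[OF f]]]
      by simp
    then show "m (m e f) (m e f) = m e f"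
      using inj e f by (simp add: inj_on_eq_iff)
  qed (use e f in simp)
  have normal: "m (m (m e f) g) e = m (m (m e g) f) e" if "e \<in> S.E" "f \<in> S.E" "g \<in> S.E" for e f g
  proof -
    have "\<phi> (m (m (m e f) g) e) = \<phi> (m (m (m e g) f) e)"
      using hom that fixed_idem_pairs_normal[OF fixed[OF that(1)] fixed[OF that(2)] fixed[OF that(3)]]
      by simp
    then show ?thesis
      using inj that by (simp add: inj_on_eq_iff)
  qed
  show ?thesis
    unfolding generalized_inverse_def orthodox_def
    using reg closed normal by simp
qed

section \<open>Relabelling the factors\<close>

definition transfer_op :: "('a \<Rightarrow> 'b) \<Rightarrow> 'a set \<Rightarrow> ('a \<Rightarrow> 'a \<Rightarrow> 'a) \<Rightarrow> 'b \<Rightarrow> 'b \<Rightarrow> 'b" where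
  "transfer_op f A op x y = f (op (inv_into A f x) (inv_into A f y))"

lemma transfer_op_image [simp]:
  "inj_on f A \<Longrightarrow> x \<in> A \<Longrightarrow> y \<in> A \<Longrightarrow> transfer_op f A op (f x) (f y) = f (op x y)"
  by (simp add: transfer_op_def)

lemma sgrp_transfer: "inj_on f A \<Longrightarrow> sgrp A op \<Longrightarrow> sgrp (f ` A) (transfer_op f A op)"
  unfolding sgrp_def by simp

lemma rectangular_band_transfer:
  assumes f: "inj_on f A" and band: "rectangular_band A op"
  shows "rectangular_band (f ` A) (transfer_op f A op)"
proof -
  have sgrp: "sgrp A op" and idem: "\<forall>x\<in>A. op x x = x"
    and rect: "\<forall>x\<in>A. \<forall>y\<in>A. \<forall>z\<in>A. op (op x y) z = op x z"
    using band unfolding rectangular_band_def by blast+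
  have "op x y \<in> A" if "x \<in> A" "y \<in> A" for x y
    using sgrp that unfolding sgrp_def by blast
  then show ?thesis
    unfolding rectangular_band_def using sgrp_transfer[OF f sgrp] f idem rect by simp
qed

lemma inverse_sgrp_transfer:
  assumes f: "inj_on f A" and inv: "inverse_sgrp A op"
  shows "inverse_sgrp (f ` A) (transfer_op f A op)"
    and "a \<in> A \<Longrightarrow> sinv (f ` A) (transfer_op f A op) (f a) = f (sinv A op a)"
proof -
  interpret A: inverse_semigroup_on A op
    by unfold_locales (rule inv)
  interpret B: semigroup_on "f ` A" "transfer_op f A op"
    by unfold_locales (rule sgrp_transfer[OF f A.sgrp])
  have inverses: "B.inverses (f a) = f ` A.inverses a" if a: "a \<in> A" for a
  proof (intro set_eqI iffI)
    fix y assume y: "y \<in> B.inverses (f a)"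
    then obtain x where x: "x \<in> A" "y = f x"
      using B.inverses_closed by blast
    have "f (op (op a x) a) = f a" "f (op (op x a) x) = f x"
      using B.inverse_eqs[OF y] a x f by simp_all
    then have "x \<in> A.inverses a"
      using a x inj_on_eq_iff[OF f] by (intro A.inversesI) simp_all
    then show "y \<in> f ` A.inverses a"
      using x by blast
  next
    fix y assume "y \<in> f ` A.inverses a"
    then obtain x where x: "x \<in> A.inverses a" "y = f x"
      by blast
    then show "y \<in> B.inverses (f a)"
      using a f by (intro B.inversesI) simp_all
  qed
  show B_inverse: "inverse_sgrp (f ` A) (transfer_op f A op)"
    unfolding B.inverse_sgrp_iff
  proof
    fix b assume "b \<in> f ` A"
    then obtain a where a: "a \<in> A" "b = f a"
      by blast
    have "f (sinv A op a) \<in> B.inverses b"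
      using inverses a A.sinv_inverses by simp
    moreover have "y = f (sinv A op a)" if "y \<in> B.inverses b" for y
      using that inverses a A.sinv_eqI by auto
    ultimately show "\<exists>!y. y \<in> B.inverses b"
      by (rule ex1I)
  qed
  interpret B: inverse_semigroup_on "f ` A" "transfer_op f A op"
    by unfold_locales (rule B_inverse)
  show "sinv (f ` A) (transfer_op f A op) (f a) = f (sinv A op a)" if a: "a \<in> A"
    by (rule B.sinv_eqI) (use a inverses A.sinv_inverses in simp_all)
qed

definition transfer_act :: "('k \<Rightarrow> 'l) \<Rightarrow> 'k set \<Rightarrow> ('t \<Rightarrow> 'u) \<Rightarrow> 't set
    \<Rightarrow> ('t \<Rightarrow> 'k \<Rightarrow> 'k) \<Rightarrow> 'u \<Rightarrow> 'l \<Rightarrow> 'l" where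
  "transfer_act f K g T act t a = f (act (inv_into T g t) (inv_into K f a))"

lemma transfer_act_image [simp]:
  "inj_on f K \<Longrightarrow> inj_on g T \<Longrightarrow> t \<in> T \<Longrightarrow> a \<in> K \<Longrightarrow> transfer_act f K g T act (g t) (f a) = f (act t a)"
  by (simp add: transfer_act_def)

lemma embeds_in_lsd_transfer:
  assumes E: "embeds_in_lsd S m K km T tm act" and f: "inj_on f K" and g: "inj_on g T"
  shows "embeds_in_lsd S m (f ` K) (transfer_op f K km) (g ` T) (transfer_op g T tm)
    (transfer_act f K g T act)"
proof -
  interpret lsd_context K km T tm act
    using E unfolding embeds_in_lsd_def by unfold_locales blast+
  obtain \<phi> where inj: "inj_on \<phi> S" and car: "\<phi> ` S \<subseteq> lsd_carrier K T tm act"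
    and hom: "\<forall>x\<in>S. \<forall>y\<in>S. \<phi> (m x y) = lmult (\<phi> x) (\<phi> y)"
    using E unfolding embeds_in_lsd_def by blast
  let ?km = "transfer_op f K km" and ?tm = "transfer_op g T tm" and ?act = "transfer_act f K g T act"
  have sinv: "sinv (g ` T) ?tm (g t) = g (sinv T tm t)" if "t \<in> T" for t
    using inverse_sgrp_transfer(2)[OF g inverse that] .
  have mult: "lsd_mult ?km (g ` T) ?tm ?act (f a, g t) (f b, g u) = map_prod f g (lmult (a, t) (b, u))"
    if "a \<in> K" "t \<in> T" "b \<in> K" "u \<in> T" for a t b u
    using that f g sinv by (simp add: lsd_mult_def)
  have car_K_T: "lsd_carrier K T tm act \<subseteq> K \<times> T"
    unfolding lsd_carrier_def by auto
  have "sgrp_action (f ` K) ?km (g ` T) ?tm ?act"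
    unfolding sgrp_action_def using f g by simp
  moreover have "inj_on (map_prod f g \<circ> \<phi>) S"
    using inj car car_K_T map_prod_inj_on[OF f g] by (blast intro: comp_inj_on inj_on_subset)
  moreover have "(map_prod f g \<circ> \<phi>) ` S \<subseteq> lsd_carrier (f ` K) (g ` T) ?tm ?act"
    using car f g sinv unfolding lsd_carrier_def by auto
  moreover have "(map_prod f g \<circ> \<phi>) (m x y) = lsd_mult ?km (g ` T) ?tm ?act
      ((map_prod f g \<circ> \<phi>) x) ((map_prod f g \<circ> \<phi>) y)" if x: "x \<in> S" and y: "y \<in> S" for x y
  proof -
    obtain a t b u where ab: "\<phi> x = (a, t)" "\<phi> y = (b, u)"
      by fastforce
    moreover have "(a, t) \<in> K \<times> T" "(b, u) \<in> K \<times> T"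
      using car car_K_T x y unfolding ab[symmetric] by auto
    ultimately show ?thesis
      using hom x y mult by simp
  qed
  ultimately show ?thesis
    unfolding embeds_in_lsd_def
    using rectangular_band_transfer[OF f band] inverse_sgrp_transfer(1)[OF g inverse] by blast
qed

(* An injection of pairs of sets into sets of sets, for any fixed c: singletons code the first
   component, and x is coded in the second as {c, x}, or as {} when x = c. *)
definition encode_pair :: "'a \<Rightarrow> 'a set \<times> 'a set \<Rightarrow> 'a set set" where
  "encode_pair c p = (\<lambda>x. {x}) ` fst p \<union> (\<lambda>x. if x = c then {} else {c, x}) ` snd p"

lemma inj_encode_pair: "inj_on (encode_pair c) A"
proof (rule inj_onI)
  fix p q assume eq: "encode_pair c p = encode_pair c q"
  have fst: "{x} \<in> encode_pair c p \<longleftrightarrow> x \<in> fst p" for x p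
    unfolding encode_pair_def by auto
  have snd: "(if y = c then {} else {c, y}) \<in> encode_pair c p \<longleftrightarrow> y \<in> snd p" for y p
    unfolding encode_pair_def by (auto simp: doubleton_eq_iff split: if_splits)
  have "fst p = fst q" "snd p = snd q"
    using fst[of _ p] fst[of _ q] snd[of _ p] snd[of _ q] eq by blast+
  then show "p = q"
    by (rule prod_eqI)
qed

theorem proposition6p2:
  fixes S :: "'a set" and m :: "'a \<Rightarrow> 'a \<Rightarrow> 'a"
  assumes "regular_sgrp S m"
  shows "(generalized_inverse S m \<longleftrightarrow>
            (\<exists>(K :: 'a set set set) km (T :: 'a set set set) tm act.
               embeds_in_lsd S m K km T tm act))
       \<and> ((\<exists>(K :: 'k set) km (T :: 't set) tm act. embeds_in_lsd S m K km T tm act)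
            \<longrightarrow> generalized_inverse S m)"
proof (intro conjI impI iffI)
  assume "generalized_inverse S m"
  then interpret gen_inverse_semigroup_on S m
    by unfold_locales
  show "\<exists>(K :: 'a set set set) km (T :: 'a set set set) tm act. embeds_in_lsd S m K km T tm act"
    by (intro exI)
      (rule embeds_in_lsd_transfer[OF embeds_in_lsd_gamma inj_encode_pair inj_singleton])
next
  assume "\<exists>(K :: 'a set set set) km (T :: 'a set set set) tm act. embeds_in_lsd S m K km T tm act"
  then show "generalized_inverse S m"
    using generalized_inverse_if_embeds_in_lsd assms by blast
next
  assume "\<exists>(K :: 'k set) km (T :: 't set) tm act. embeds_in_lsd S m K km T tm act"
  then show "generalized_inverse S m"
    using generalized_inverse_if_embeds_in_lsd assms by blast
qed

end
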